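(* There is an absolute constant $c>0$ such that, for every graph $G=(V,E)$ on $n\ge2$ vertices, with $\alpha=c/\log n$, the edge set of $G$ can be decomposed into an edge-disjoint union of subgraphs $G_1\uplus G_2\uplus\cdots\uplus G_k$ such that (a) each vertex appears in at most $O(\log^2 n)$ of the subgraphs, and (b) each subgraph $G_i$ is an $\frac{\alpha}{4}$-weakly-regular $\alpha$-expander.
   Context: For a graph $H=(U,F)$ and $S\subseteq U$, $\mathrm{vol}(S)=\sum_{v\in S}\deg_H(v)$. $H$ is an $\alpha$-expander if for every $S\subseteq U$, $|F(S,U\setminus S)|\ge\alpha\min\{\mathrm{vol}(S),\mathrm{vol}(U\setminus S)\}$. For $\gamma\in[0,1]$, $H$ is $\gamma$-weakly-regular if every vertex of $H$ has degree at least $\gamma$ times the average degree $\frac{1}{|U|}\sum_{u\in U}\deg_H(u)$. The $O(\cdot)$ hides an absolute constant. *)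

theory Defs
  imports Complex_Main
begin

definition simple_graph :: "'a set \<Rightarrow> 'a set set \<Rightarrow> bool" where
  "simple_graph V E \<longleftrightarrow> finite V \<and>
     (\<forall>e\<in>E. \<exists>u v. e = {u, v} \<and> u \<noteq> v \<and> u \<in> V \<and> v \<in> V)"

definition deg :: "'a set set \<Rightarrow> 'a \<Rightarrow> nat" where
  "deg F v = card {e\<in>F. v \<in> e}"

definition vol :: "'a set set \<Rightarrow> 'a set \<Rightarrow> nat" where
  "vol F S = (\<Sum>v\<in>S. deg F v)"

definition cut_edges :: "'a set set \<Rightarrow> 'a set \<Rightarrow> 'a set \<Rightarrow> 'a set set" where
  "cut_edges F S T = {e\<in>F. e \<inter> S \<noteq> {} \<and> e \<inter> T \<noteq> {}}"

definition is_expander :: "real \<Rightarrow> 'a set \<Rightarrow> 'a set set \<Rightarrow> bool" where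
  "is_expander \<alpha> U F \<longleftrightarrow>
     (\<forall>S\<subseteq>U. real (card (cut_edges F S (U - S)))
               \<ge> \<alpha> * real (min (vol F S) (vol F (U - S))))"

definition weakly_regular :: "real \<Rightarrow> 'a set \<Rightarrow> 'a set set \<Rightarrow> bool" where
  "weakly_regular \<gamma> U F \<longleftrightarrow>
     (\<forall>u\<in>U. real (deg F u) \<ge> \<gamma> * (real (\<Sum>w\<in>U. deg F w) / real (card U)))"

end

theory Submission
  imports Defs "HOL-Library.Disjoint_Sets"
begin

(* Take a partition P of V minimising the potential
     |crossing edges| + 2 phi sum_X vol(X) ln vol(X) + (phi/4) sum_X vol(X) ln |X|,
   with phi = 1/(32 ln n) and volumes measured in the whole graph, so that they add up when a
   part is split. Splitting a part X into S and T = X - S adds the cut between them, lowers the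
   entropy term by at least 2 phi ln 2 min(vol S, vol T) and does not raise the last term; by
   minimality every induced part is a phi-expander. Splitting off a single vertex u instead makes
   the last term drop by at least (phi/4) vol(X)/|X|, which bounds deg u from below: the parts are
   weakly regular. Comparing with the trivial partition {V} shows that fewer than half of the
   edges cross P. Recursing on the crossing edges, all edges are covered after 2 log_2 n + 2 rounds,
   and each vertex lies in one part per round. *)

section \<open>Simple graphs and volumes\<close>

definition induced_edges :: "'a set set \<Rightarrow> 'a set \<Rightarrow> 'a set set" where
  "induced_edges E X = {e\<in>E. e \<subseteq> X}"

lemma simple_graph_edgeE:
  assumes "simple_graph V E" "e \<in> E"
  obtains u v where "e = {u, v}" "u \<noteq> v" "u \<in> V" "v \<in> V"
  using assms unfolding simple_graph_def by auto

lemma simple_graph_finite_vertices: "simple_graph V E \<Longrightarrow> finite V"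
  unfolding simple_graph_def by simp

lemma simple_graph_edges_subset_Pow: "simple_graph V E \<Longrightarrow> E \<subseteq> Pow V"
  unfolding simple_graph_def by auto

lemma simple_graph_finite_edges:
  assumes "simple_graph V E"
  shows "finite E"
proof (rule finite_subset)
  show "E \<subseteq> Pow V"
    using assms by (rule simple_graph_edges_subset_Pow)
  show "finite (Pow V)"
    using assms by (simp add: simple_graph_finite_vertices)
qed

lemma simple_graph_subset_edges: "simple_graph V E \<Longrightarrow> F \<subseteq> E \<Longrightarrow> simple_graph V F"
  unfolding simple_graph_def by auto

lemma simple_graph_induced_edges:
  assumes "simple_graph V E" "X \<subseteq> V"
  shows "simple_graph X (induced_edges E X)"
  unfolding simple_graph_def
proof (intro conjI ballI)
  show "finite X"
    using assms by (meson finite_subset simple_graph_finite_vertices)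
  fix e assume "e \<in> induced_edges E X"
  then have "e \<in> E" "e \<subseteq> X"
    unfolding induced_edges_def by auto
  obtain u v where "e = {u, v}" "u \<noteq> v" "u \<in> V" "v \<in> V"
    using assms(1) \<open>e \<in> E\<close> by (rule simple_graph_edgeE)
  then show "\<exists>u v. e = {u, v} \<and> u \<noteq> v \<and> u \<in> X \<and> v \<in> X"
    using \<open>e \<subseteq> X\<close> by auto
qed

lemma simple_graph_edge_nonempty:
  assumes "simple_graph V E" "e \<in> E"
  shows "e \<noteq> {}"
proof -
  obtain u v where "e = {u, v}" "u \<noteq> v" "u \<in> V" "v \<in> V"
    using assms by (rule simple_graph_edgeE)
  then show ?thesis
    by simp
qed

lemma induced_edges_disjoint:
  assumes "simple_graph V E" "X \<inter> Y = {}"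
  shows "induced_edges E X \<inter> induced_edges E Y = {}"
  using assms(2) simple_graph_edge_nonempty[OF assms(1)] unfolding induced_edges_def by blast

lemma card_edges_le:
  assumes "simple_graph V E"
  shows "card E \<le> card V * card V"
proof -
  have "E \<subseteq> (\<lambda>(u, v). {u, v}) ` (V \<times> V)"
  proof
    fix e assume "e \<in> E"
    obtain u v where "e = {u, v}" "u \<noteq> v" "u \<in> V" "v \<in> V"
      using assms \<open>e \<in> E\<close> by (rule simple_graph_edgeE)
    then show "e \<in> (\<lambda>(u, v). {u, v}) ` (V \<times> V)"
      by auto
  qed
  moreover have "finite V"
    using assms by (rule simple_graph_finite_vertices)
  ultimately have "card E \<le> card (V \<times> V)"
    by (meson card_image_le card_mono finite_SigmaI finite_imageI le_trans)
  then show ?thesis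
    by (simp add: card_cartesian_product)
qed

lemma vol_eq_twice_card_edges:
  assumes "simple_graph V E"
  shows "vol E V = 2 * card E"
proof -
  have "finite V" "finite E"
    using assms by (simp_all add: simple_graph_finite_vertices simple_graph_finite_edges)
  have "vol E V = (\<Sum>v\<in>V. \<Sum>e\<in>E. if v \<in> e then 1 else 0)"
    unfolding vol_def deg_def using \<open>finite E\<close> by (simp add: sum.If_cases Int_def)
  also have "\<dots> = (\<Sum>e\<in>E. card (V \<inter> e))"
    using \<open>finite V\<close> by (subst sum.swap) (simp add: sum.If_cases)
  also have "\<dots> = (\<Sum>e\<in>E. 2)"
  proof (rule sum.cong)
    fix e assume "e \<in> E"
    obtain u v where "e = {u, v}" "u \<noteq> v" "u \<in> V" "v \<in> V"
      using assms \<open>e \<in> E\<close> by (rule simple_graph_edgeE)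
    then show "card (V \<inter> e) = 2"
      by (simp add: insert_absorb Int_absorb1)
  qed simp
  finally show ?thesis
    by simp
qed

lemma vol_empty [simp]: "vol E {} = 0"
  unfolding vol_def by simp

lemma vol_split: "finite X \<Longrightarrow> S \<subseteq> X \<Longrightarrow> vol E X = vol E S + vol E (X - S)"
  unfolding vol_def by (simp add: sum.subset_diff[of S X] add.commute)

lemma vol_induced_edges_le: "finite E \<Longrightarrow> vol (induced_edges E X) S \<le> vol E S"
  unfolding vol_def deg_def induced_edges_def by (intro sum_mono card_mono) auto

lemma deg_induced_edges_eq_card_cut:
  assumes "simple_graph V E" "u \<in> X"
  shows "deg (induced_edges E X) u = card (cut_edges (induced_edges E X) {u} (X - {u}))"
proof -
  have "e \<inter> (X - {u}) \<noteq> {}" if "e \<in> E" "e \<subseteq> X" "u \<in> e" for e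
    using simple_graph_edgeE[OF assms(1) \<open>e \<in> E\<close>] that by auto
  then have "{e \<in> induced_edges E X. u \<in> e} = cut_edges (induced_edges E X) {u} (X - {u})"
    using assms(2) unfolding cut_edges_def induced_edges_def by auto
  then show ?thesis
    unfolding deg_def by simp
qed

lemma ln_2_ge_half: "1 / 2 \<le> ln (2 :: real)"
  using ln_le_minus_one[of "1 / 2"] by (simp add: ln_div)

lemma inverse_le_ln_diff:
  fixes x :: real
  assumes "1 < x"
  shows "1 / x \<le> ln x - ln (x - 1)"
proof -
  have "ln ((x - 1) / x) \<le> (x - 1) / x - 1"
    using assms by (intro ln_le_minus_one) auto
  also have "\<dots> = - 1 / x"
    using assms by (simp add: field_simps)
  finally show ?thesis
    using assms by (simp add: ln_div)
qed

lemma add_divide_le_ln_split_gain: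
  fixes a b x :: real
  assumes "0 \<le> a" "0 \<le> b" "2 \<le> x"
  shows "(a + b) / x \<le> a * ln x + b * (ln x - ln (x - 1))"
proof -
  have "1 / x \<le> ln x - ln (x - 1)"
    using assms(3) by (intro inverse_le_ln_diff) simp
  moreover have "ln x - ln (x - 1) \<le> ln x"
    using assms(3) by simp
  ultimately have "a * (1 / x) + b * (1 / x) \<le> a * ln x + b * (ln x - ln (x - 1))"
    using assms(1,2) by (intro add_mono mult_left_mono) linarith+
  then show ?thesis
    by (simp add: add_divide_distrib)
qed

lemma xlnx_superadditive:
  fixes a b :: real
  assumes "0 \<le> a" "0 \<le> b"
  shows "a * ln a + b * ln b + ln 2 * min a b \<le> (a + b) * ln (a + b)"
proof -
  have *: "a * ln a + b * ln b + ln 2 * a \<le> (a + b) * ln (a + b)" if "0 \<le> a" "a \<le> b" for a b :: real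
  proof (cases "a = 0")
    case False
    then have "0 < a" "0 < b"
      using that by auto
    have "ln a \<le> ln ((a + b) / 2)"
      using \<open>0 < a\<close> that by simp
    then have "a * ln a \<le> a * (ln (a + b) - ln 2)"
      using \<open>0 < a\<close> \<open>0 < b\<close> by (simp add: ln_div)
    moreover have "b * ln b \<le> b * ln (a + b)"
      using \<open>0 < a\<close> \<open>0 < b\<close> by (intro mult_left_mono) auto
    ultimately show ?thesis
      by (simp add: algebra_simps)
  qed (use that in \<open>auto intro: mult_left_mono\<close>)
  show ?thesis
    using *[of a b] *[of b a] assms by (cases "a \<le> b") (auto simp: add.commute min_def)
qed

lemma ln_of_nat_nonneg: "0 \<le> ln (real n)"
  by (cases n) auto

lemma ln_card_mono:
  assumes "finite X" "S \<subseteq> X"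
  shows "ln (real (card S)) \<le> ln (real (card X))"
proof (cases "card S = 0")
  case False
  moreover have "card S \<le> card X"
    using assms by (rule card_mono)
  ultimately show ?thesis
    by simp
qed (simp add: ln_of_nat_nonneg)

section \<open>The potential of a partition\<close>

definition crossing_edges :: "'a set set \<Rightarrow> 'a set set \<Rightarrow> 'a set set" where
  "crossing_edges E P = E - (\<Union>X\<in>P. induced_edges E X)"

lemma partition_on_disjoint_parts:
  "partition_on V P \<Longrightarrow> X \<in> P \<Longrightarrow> Y \<in> P \<Longrightarrow> X \<noteq> Y \<Longrightarrow> X \<inter> Y = {}"
  using disjointD partition_onD2 by blast

lemma partition_on_part_subset: "partition_on V P \<Longrightarrow> X \<in> P \<Longrightarrow> X \<subseteq> V"
  by (auto dest: partition_onD1)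

lemma partition_on_card_parts_containing_le_1:
  assumes "finite V" "partition_on V P"
  shows "card {X\<in>P. v \<in> X} \<le> 1"
proof -
  have "finite {X\<in>P. v \<in> X}"
    using finite_elements[OF assms] by simp
  then show ?thesis
    using partition_on_disjoint_parts[OF assms(2)] by (auto simp: card_le_Suc0_iff_eq)
qed

lemma partition_on_split:
  assumes P: "partition_on V P" and X: "X \<in> P"
    and ST: "S \<union> T = X" "S \<inter> T = {}" "S \<noteq> {}" "T \<noteq> {}"
  shows "partition_on V (insert S (insert T (P - {X})))"
proof (rule partition_onI)
  have "\<Union>P = X \<union> \<Union>(P - {X})"
    using X by blast
  then show "\<Union>(insert S (insert T (P - {X}))) = V"
    using partition_onD1[OF P] ST(1) by auto
  show "{} \<notin> insert S (insert T (P - {X}))"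
    using partition_onD3[OF P] ST(3,4) by auto
  fix p q assume "p \<in> insert S (insert T (P - {X}))" "q \<in> insert S (insert T (P - {X}))" "p \<noteq> q"
  then show "disjnt p q"
    using partition_on_disjoint_parts[OF P] X ST(1,2) unfolding disjnt_def by auto
qed

lemma crossing_edges_split:
  assumes P: "partition_on V P" and X: "X \<in> P" and ST: "S \<union> T = X" "S \<inter> T = {}"
  shows "crossing_edges E (insert S (insert T (P - {X})))
           = crossing_edges E P \<union> cut_edges (induced_edges E X) S T"
proof (intro set_eqI iffI)
  fix e assume "e \<in> crossing_edges E (insert S (insert T (P - {X})))"
  then have "e \<in> E" "\<not> e \<subseteq> S" "\<not> e \<subseteq> T" "\<And>Y. Y \<in> P \<Longrightarrow> Y \<noteq> X \<Longrightarrow> \<not> e \<subseteq> Y"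
    unfolding crossing_edges_def induced_edges_def by auto
  then show "e \<in> crossing_edges E P \<union> cut_edges (induced_edges E X) S T"
    using ST(1) unfolding crossing_edges_def cut_edges_def induced_edges_def
    by (cases "e \<subseteq> X") auto
next
  fix e assume "e \<in> crossing_edges E P \<union> cut_edges (induced_edges E X) S T"
  then show "e \<in> crossing_edges E (insert S (insert T (P - {X})))"
    using partition_on_disjoint_parts[OF P X] X ST
    unfolding crossing_edges_def cut_edges_def induced_edges_def by blast
qed

definition potential :: "real \<Rightarrow> 'a set set \<Rightarrow> 'a set set \<Rightarrow> real" where
  "potential \<phi> E P = real (card (crossing_edges E P))
     + 2 * \<phi> * (\<Sum>X\<in>P. real (vol E X) * ln (real (vol E X)))
     + \<phi> / 4 * (\<Sum>X\<in>P. real (vol E X) * ln (real (card X)))"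

definition split_increment :: "real \<Rightarrow> 'a set set \<Rightarrow> 'a set \<Rightarrow> 'a set \<Rightarrow> 'a set \<Rightarrow> real" where
  "split_increment \<phi> E X S T = real (card (cut_edges (induced_edges E X) S T))
     + 2 * \<phi> * (real (vol E S) * ln (real (vol E S)) + real (vol E T) * ln (real (vol E T))
                 - real (vol E X) * ln (real (vol E X)))
     + \<phi> / 4 * (real (vol E S) * ln (real (card S)) + real (vol E T) * ln (real (card T))
                 - real (vol E X) * ln (real (card X)))"

lemma potential_split:
  assumes "finite V" "finite E" and P: "partition_on V P" and X: "X \<in> P"
    and ST: "S \<union> T = X" "S \<inter> T = {}" "S \<noteq> {}" "T \<noteq> {}"
  shows "potential \<phi> E (insert S (insert T (P - {X}))) = potential \<phi> E P + split_increment \<phi> E X S T"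
proof -
  have "finite P"
    using finite_elements[OF \<open>finite V\<close> P] .
  have "S \<notin> P - {X}" "T \<notin> P - {X}" "S \<noteq> T"
    using partition_on_disjoint_parts[OF P X] ST by auto
  then have sum_split: "(\<Sum>Y\<in>insert S (insert T (P - {X})). h Y) = h S + h T + (\<Sum>Y\<in>P. h Y) - h X"
    for h :: "'a set \<Rightarrow> real"
    using \<open>finite P\<close> X by (simp add: sum.remove)
  have "crossing_edges E P \<inter> cut_edges (induced_edges E X) S T = {}"
    using X unfolding crossing_edges_def cut_edges_def induced_edges_def by auto
  then have "card (crossing_edges E (insert S (insert T (P - {X}))))
      = card (crossing_edges E P) + card (cut_edges (induced_edges E X) S T)"
    using \<open>finite E\<close> crossing_edges_split[OF P X ST(1,2)]
    by (simp add: card_Un_disjoint crossing_edges_def cut_edges_def induced_edges_def)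
  then show ?thesis
    unfolding potential_def split_increment_def sum_split by (simp add: algebra_simps)
qed

lemma split_increment_le_cut:
  assumes "finite X" "S \<subseteq> X" "0 \<le> \<phi>"
  shows "split_increment \<phi> E X S (X - S) \<le> real (card (cut_edges (induced_edges E X) S (X - S)))
           - 2 * \<phi> * (ln 2 * min (real (vol E S)) (real (vol E (X - S))))"
proof -
  define a b where "a = real (vol E S)" and "b = real (vol E (X - S))"
  have vol_X: "real (vol E X) = a + b"
    using vol_split[OF assms(1,2)] unfolding a_def b_def by simp
  have "a * ln (real (card S)) + b * ln (real (card (X - S))) \<le> (a + b) * ln (real (card X))"
    using ln_card_mono[OF assms(1,2)] ln_card_mono[OF assms(1), of "X - S"]
    unfolding a_def b_def by (simp add: distrib_right add_mono mult_left_mono)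
  then have "\<phi> / 4 * (a * ln (real (card S)) + b * ln (real (card (X - S))) - (a + b) * ln (real (card X))) \<le> 0"
    using \<open>0 \<le> \<phi>\<close> by (intro mult_nonneg_nonpos) auto
  moreover have "a * ln a + b * ln b + ln 2 * min a b \<le> (a + b) * ln (a + b)"
    unfolding a_def b_def by (intro xlnx_superadditive) simp_all
  then have "2 * \<phi> * (a * ln a + b * ln b - (a + b) * ln (a + b)) \<le> 2 * \<phi> * (- ln 2 * min a b)"
    using \<open>0 \<le> \<phi>\<close> by (intro mult_left_mono) auto
  ultimately show ?thesis
    unfolding split_increment_def a_def[symmetric] b_def[symmetric] vol_X by linarith
qed

lemma split_increment_singleton_le_cut:
  assumes "finite X" "u \<in> X" "2 \<le> card X" "0 \<le> \<phi>"
  shows "split_increment \<phi> E X {u} (X - {u}) \<le> real (card (cut_edges (induced_edges E X) {u} (X - {u})))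
           - \<phi> / 4 * (real (vol E X) / real (card X))"
proof -
  define a b x where "a = real (vol E {u})" and "b = real (vol E (X - {u}))" and "x = real (card X)"
  have vol_X: "real (vol E X) = a + b"
    using vol_split[OF \<open>finite X\<close>, of "{u}"] \<open>u \<in> X\<close> unfolding a_def b_def by simp
  have x: "2 \<le> x" "real (card (X - {u})) = x - 1"
    using assms(1-3) unfolding x_def by (simp_all add: of_nat_diff)
  have "a * ln a + b * ln b + ln 2 * min a b \<le> (a + b) * ln (a + b)" "0 \<le> ln 2 * min a b"
    unfolding a_def b_def by (simp_all add: xlnx_superadditive)
  then have "2 * \<phi> * (a * ln a + b * ln b - (a + b) * ln (a + b)) \<le> 0"
    using \<open>0 \<le> \<phi>\<close> by (intro mult_nonneg_nonpos) auto
  moreover have "\<phi> / 4 * ((a + b) / x) \<le> \<phi> / 4 * (a * ln x + b * (ln x - ln (x - 1)))"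
    using \<open>0 \<le> \<phi>\<close> x(1) unfolding a_def b_def by (intro mult_left_mono add_divide_le_ln_split_gain) simp_all
  moreover have "split_increment \<phi> E X {u} (X - {u}) = real (card (cut_edges (induced_edges E X) {u} (X - {u})))
      + 2 * \<phi> * (a * ln a + b * ln b - (a + b) * ln (a + b))
      - \<phi> / 4 * (a * ln x + b * (ln x - ln (x - 1)))"
    unfolding split_increment_def a_def[symmetric] b_def[symmetric] vol_X x(2) x_def[symmetric]
    by (simp add: algebra_simps)
  ultimately show ?thesis
    unfolding vol_X x_def[symmetric] by linarith
qed

lemma crossing_edges_le_potential:
  "0 \<le> \<phi> \<Longrightarrow> real (card (crossing_edges E P)) \<le> potential \<phi> E P"
  unfolding potential_def
  by (intro add_increasing2 mult_nonneg_nonneg sum_nonneg) (auto intro!: mult_nonneg_nonneg ln_of_nat_nonneg)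

section \<open>Minimisers of the potential\<close>

lemma is_arg_min_potential_split_increment_nonneg:
  assumes "finite V" "finite E" and P: "is_arg_min (potential \<phi> E) (partition_on V) P"
    and X: "X \<in> P" and S: "S \<subseteq> X" "S \<noteq> {}" "S \<noteq> X"
  shows "0 \<le> split_increment \<phi> E X S (X - S)"
proof -
  have part: "partition_on V P"
    using P by (simp add: is_arg_min_linorder)
  have ST: "S \<union> (X - S) = X" "S \<inter> (X - S) = {}" "S \<noteq> {}" "X - S \<noteq> {}"
    using S by auto
  have "potential \<phi> E P \<le> potential \<phi> E (insert S (insert (X - S) (P - {X})))"
    using P partition_on_split[OF part X ST] by (simp add: is_arg_min_linorder)
  then show ?thesis
    using potential_split[where \<phi> = \<phi>, OF assms(1,2) part X ST] by linarith
qed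

lemma is_arg_min_potential_expander:
  assumes "finite V" "finite E" "0 < \<phi>" and P: "is_arg_min (potential \<phi> E) (partition_on V) P"
    and X: "X \<in> P"
  shows "is_expander \<phi> X (induced_edges E X)"
  unfolding is_expander_def
proof (intro allI impI)
  fix S assume "S \<subseteq> X"
  define a b where "a = real (vol E S)" and "b = real (vol E (X - S))"
  have "finite X"
    using P X \<open>finite V\<close> partition_on_part_subset finite_subset by (metis is_arg_min_linorder)
  show "\<phi> * real (min (vol (induced_edges E X) S) (vol (induced_edges E X) (X - S)))
          \<le> real (card (cut_edges (induced_edges E X) S (X - S)))"
  proof (cases "S = {} \<or> S = X")
    case False
    then have "0 \<le> split_increment \<phi> E X S (X - S)"
      using is_arg_min_potential_split_increment_nonneg[OF assms(1,2) P X \<open>S \<subseteq> X\<close>] by auto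
    then have cut: "2 * \<phi> * (ln 2 * min a b) \<le> real (card (cut_edges (induced_edges E X) S (X - S)))"
      using split_increment_le_cut[OF \<open>finite X\<close> \<open>S \<subseteq> X\<close>, of \<phi> E] \<open>0 < \<phi>\<close>
      unfolding a_def b_def by linarith
    have "real (min (vol (induced_edges E X) S) (vol (induced_edges E X) (X - S))) \<le> min a b"
      using vol_induced_edges_le[OF \<open>finite E\<close>, of X S] vol_induced_edges_le[OF \<open>finite E\<close>, of X "X - S"]
      unfolding a_def b_def by (auto simp: min_def)
    moreover have "min a b \<le> 2 * ln 2 * min a b"
      using ln_2_ge_half mult_right_mono[of 1 "2 * ln 2" "min a b"] unfolding a_def b_def by simp
    ultimately have "real (min (vol (induced_edges E X) S) (vol (induced_edges E X) (X - S))) \<le> 2 * ln 2 * min a b"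
      by linarith
    then have "\<phi> * real (min (vol (induced_edges E X) S) (vol (induced_edges E X) (X - S)))
        \<le> 2 * \<phi> * (ln 2 * min a b)"
      using \<open>0 < \<phi>\<close> mult_left_mono[of _ _ \<phi>] by (simp add: ac_simps)
    with cut show ?thesis
      by linarith
  qed auto
qed

lemma is_arg_min_potential_weakly_regular:
  assumes E: "simple_graph V E" and "0 < \<phi>" and P: "is_arg_min (potential \<phi> E) (partition_on V) P"
    and X: "X \<in> P"
  shows "weakly_regular (\<phi> / 4) X (induced_edges E X)"
  unfolding weakly_regular_def
proof
  fix u assume "u \<in> X"
  have "finite V" "finite E"
    using E by (simp_all add: simple_graph_finite_vertices simple_graph_finite_edges)
  then have "finite X"
    using P X partition_on_part_subset finite_subset by (metis is_arg_min_linorder)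
  have deg_u: "deg (induced_edges E X) u = card (cut_edges (induced_edges E X) {u} (X - {u}))"
    using deg_induced_edges_eq_card_cut[OF E \<open>u \<in> X\<close>] .
  show "\<phi> / 4 * (real (\<Sum>w\<in>X. deg (induced_edges E X) w) / real (card X)) \<le> real (deg (induced_edges E X) u)"
  proof (cases "X = {u}")
    case False
    then have "X - {u} \<noteq> {}"
      using \<open>u \<in> X\<close> by auto
    then have "card (X - {u}) \<noteq> 0"
      using \<open>finite X\<close> by simp
    then have "2 \<le> card X"
      using \<open>u \<in> X\<close> \<open>finite X\<close> by simp
    moreover have "0 \<le> split_increment \<phi> E X {u} (X - {u})"
      using is_arg_min_potential_split_increment_nonneg[OF \<open>finite V\<close> \<open>finite E\<close> P X, of "{u}"] False
        \<open>u \<in> X\<close> by auto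
    ultimately have "\<phi> / 4 * (real (vol E X) / real (card X)) \<le> real (deg (induced_edges E X) u)"
      using split_increment_singleton_le_cut[OF \<open>finite X\<close> \<open>u \<in> X\<close> _ less_imp_le[OF \<open>0 < \<phi>\<close>], of E]
      unfolding deg_u by linarith
    moreover have "(\<Sum>w\<in>X. deg (induced_edges E X) w) \<le> vol E X"
      using vol_induced_edges_le[OF \<open>finite E\<close>, of X X] unfolding vol_def .
    then have "real (\<Sum>w\<in>X. deg (induced_edges E X) w) \<le> real (vol E X)"
      by (simp only: of_nat_le_iff)
    then have "\<phi> / 4 * (real (\<Sum>w\<in>X. deg (induced_edges E X) w) / real (card X))
        \<le> \<phi> / 4 * (real (vol E X) / real (card X))"
      using \<open>0 < \<phi>\<close> by (intro mult_left_mono divide_right_mono) simp_all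
    ultimately show ?thesis
      by linarith
  qed (use deg_u in \<open>simp add: cut_edges_def\<close>)
qed

lemma potential_single_part_le:
  assumes E: "simple_graph V E" and n: "2 \<le> card V" and "0 \<le> \<phi>"
  shows "potential \<phi> E {V} \<le> 25 / 2 * \<phi> * ln (real (card V)) * real (card E)"
proof -
  define n m where "n = real (card V)" and "m = real (card E)"
  have "2 \<le> n"
    using n unfolding n_def by simp
  have "crossing_edges E {V} = {}"
    using simple_graph_edges_subset_Pow[OF E] unfolding crossing_edges_def induced_edges_def by auto
  moreover have vol_V: "real (vol E V) = 2 * m"
    using vol_eq_twice_card_edges[OF E] unfolding m_def by simp
  moreover have "2 * m * ln (2 * m) \<le> 2 * m * (3 * ln n)"
  proof (cases "m = 0")
    case False
    have "m \<le> n * n"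
      using card_edges_le[OF E] unfolding m_def n_def by (metis of_nat_le_iff of_nat_mult)
    moreover have "2 * (n * n) \<le> n * (n * n)"
      using \<open>2 \<le> n\<close> by (intro mult_right_mono) auto
    moreover have "0 < m"
      using False unfolding m_def by simp
    ultimately have "ln (2 * m) \<le> ln (n * (n * n))"
      by simp
    also have "\<dots> = 3 * ln n"
      using \<open>2 \<le> n\<close> by (simp add: ln_mult)
    finally show ?thesis
      using \<open>0 < m\<close> by (intro mult_left_mono) auto
  qed simp
  ultimately have "potential \<phi> E {V} = 2 * \<phi> * (2 * m * ln (2 * m)) + \<phi> / 4 * (2 * m * ln n)"
    unfolding potential_def n_def by simp
  also have "\<dots> \<le> 2 * \<phi> * (2 * m * (3 * ln n)) + \<phi> / 4 * (2 * m * ln n)"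
    using mult_left_mono[OF \<open>2 * m * ln (2 * m) \<le> 2 * m * (3 * ln n)\<close>, of "2 * \<phi>"] \<open>0 \<le> \<phi>\<close>
    by simp
  also have "\<dots> = 25 / 2 * \<phi> * ln n * m"
    by (simp add: algebra_simps)
  finally show ?thesis
    unfolding n_def m_def .
qed

lemma exists_expander_partition:
  assumes E: "simple_graph V E" and n: "2 \<le> card V"
    and "0 < \<phi>" and \<phi>: "\<phi> * ln (real (card V)) \<le> 1 / 32"
  obtains P where "partition_on V P" "2 * card (crossing_edges E P) \<le> card E"
    "\<And>X. X \<in> P \<Longrightarrow> weakly_regular (\<phi> / 4) X (induced_edges E X) \<and> is_expander \<phi> X (induced_edges E X)"
proof -
  have "finite V"
    using E by (rule simple_graph_finite_vertices)
  have "V \<noteq> {}"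
    using n by auto
  obtain P where P: "is_arg_min (potential \<phi> E) (partition_on V) P"
    using ex_is_arg_min_if_finite[OF finitely_many_partition_on[OF \<open>finite V\<close>], of "potential \<phi> E"]
      partition_on_space[OF \<open>V \<noteq> {}\<close>] by auto
  have "real (card (crossing_edges E P)) \<le> potential \<phi> E P"
    using \<open>0 < \<phi>\<close> by (intro crossing_edges_le_potential) simp
  also have "\<dots> \<le> potential \<phi> E {V}"
    using P partition_on_space[OF \<open>V \<noteq> {}\<close>] by (simp add: is_arg_min_linorder)
  also have "\<dots> \<le> 25 / 2 * (\<phi> * ln (real (card V))) * real (card E)"
    using potential_single_part_le[OF E n] \<open>0 < \<phi>\<close> by (simp add: ac_simps)
  also have "\<dots> \<le> 25 / 2 * (1 / 32) * real (card E)"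
    using \<phi> by (intro mult_right_mono) auto
  finally have "2 * card (crossing_edges E P) \<le> card E"
    by linarith
  moreover have "partition_on V P"
    using P by (simp add: is_arg_min_linorder)
  ultimately show ?thesis
    using that is_arg_min_potential_weakly_regular[OF E \<open>0 < \<phi>\<close> P]
      is_arg_min_potential_expander[OF \<open>finite V\<close> simple_graph_finite_edges[OF E] \<open>0 < \<phi>\<close> P]
    by blast
qed

section \<open>Expander decompositions\<close>

definition expander_decomposition ::
    "real \<Rightarrow> nat \<Rightarrow> 'a set \<Rightarrow> 'a set set \<Rightarrow> ('a set \<times> 'a set set) set \<Rightarrow> bool" where
  "expander_decomposition \<phi> t V E D \<longleftrightarrow> finite D \<and>
     (\<forall>(X, F)\<in>D. X \<subseteq> V \<and> simple_graph X F \<and> weakly_regular (\<phi> / 4) X F \<and> is_expander \<phi> X F) \<and>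
     disjoint_family_on snd D \<and> \<Union>(snd ` D) = E \<and> (\<forall>v\<in>V. card {p\<in>D. v \<in> fst p} \<le> t)"

lemma disjoint_family_on_Un:
  assumes "disjoint_family_on f A" "disjoint_family_on f B"
    and "\<And>a b. a \<in> A \<Longrightarrow> b \<in> B \<Longrightarrow> f a \<inter> f b = {}"
  shows "disjoint_family_on f (A \<union> B)"
  unfolding disjoint_family_on_def
proof (intro ballI impI)
  fix p q assume "p \<in> A \<union> B" "q \<in> A \<union> B" "p \<noteq> q"
  then consider "p \<in> A" "q \<in> A" | "p \<in> A" "q \<in> B" | "p \<in> B" "q \<in> A" | "p \<in> B" "q \<in> B"
    by blast
  then show "f p \<inter> f q = {}"
    using \<open>p \<noteq> q\<close> assms(3)[of p q] assms(3)[of q p]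
      disjoint_family_onD[OF assms(1)] disjoint_family_onD[OF assms(2)]
    by cases (auto simp: Int_commute)
qed

lemma expander_decomposition_extend:
  assumes E: "simple_graph V E" and P: "partition_on V P"
    and good: "\<And>X. X \<in> P \<Longrightarrow> weakly_regular (\<phi> / 4) X (induced_edges E X) \<and> is_expander \<phi> X (induced_edges E X)"
    and D: "expander_decomposition \<phi> t V (crossing_edges E P) D"
  shows "expander_decomposition \<phi> (Suc t) V E ((\<lambda>X. (X, induced_edges E X)) ` P \<union> D)"
proof -
  define A where "A = (\<lambda>X. (X, induced_edges E X)) ` P"
  have "finite V"
    using E by (rule simple_graph_finite_vertices)
  have "finite A"
    unfolding A_def using finite_elements[OF \<open>finite V\<close> P] by simp
  have pieces: "\<forall>(X, F)\<in>A. X \<subseteq> V \<and> simple_graph X F \<and> weakly_regular (\<phi> / 4) X F \<and> is_expander \<phi> X F"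
    unfolding A_def using good partition_on_part_subset[OF P] simple_graph_induced_edges[OF E] by auto
  have "disjoint_family_on snd A"
    unfolding A_def disjoint_family_on_def
    using partition_on_disjoint_parts[OF P] induced_edges_disjoint[OF E] by auto
  moreover have "disjoint_family_on snd D"
    using D unfolding expander_decomposition_def by simp
  moreover have "snd p \<inter> snd q = {}" if "p \<in> A" "q \<in> D" for p q
  proof -
    have "snd q \<subseteq> crossing_edges E P"
      using D \<open>q \<in> D\<close> unfolding expander_decomposition_def by auto
    then show ?thesis
      using \<open>p \<in> A\<close> unfolding A_def crossing_edges_def by auto
  qed
  ultimately have "disjoint_family_on snd (A \<union> D)"
    by (rule disjoint_family_on_Un)
  moreover have "\<Union>(snd ` (A \<union> D)) = E"
    using D unfolding A_def expander_decomposition_def crossing_edges_def induced_edges_def by auto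
  moreover have "card {p\<in>A \<union> D. v \<in> fst p} \<le> Suc t" if "v \<in> V" for v
  proof -
    have split: "{p\<in>A \<union> D. v \<in> fst p} = (\<lambda>X. (X, induced_edges E X)) ` {X\<in>P. v \<in> X} \<union> {p\<in>D. v \<in> fst p}"
      unfolding A_def by auto
    have "card ((\<lambda>X. (X, induced_edges E X)) ` {X\<in>P. v \<in> X}) \<le> 1"
      using card_image_le[of "{X\<in>P. v \<in> X}" "\<lambda>X. (X, induced_edges E X)"] finite_elements[OF \<open>finite V\<close> P]
        partition_on_card_parts_containing_le_1[OF \<open>finite V\<close> P, of v] by simp
    moreover have "card {p\<in>D. v \<in> fst p} \<le> t"
      using D that unfolding expander_decomposition_def by blast
    ultimately show ?thesis
      unfolding split
      using card_Un_le[of "(\<lambda>X. (X, induced_edges E X)) ` {X\<in>P. v \<in> X}" "{p\<in>D. v \<in> fst p}"] by linarith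
  qed
  ultimately show ?thesis
    using D \<open>finite A\<close> pieces unfolding expander_decomposition_def A_def by auto
qed

lemma expander_decomposition_exists:
  assumes n: "2 \<le> card V" and "0 < \<phi>" and \<phi>: "\<phi> * ln (real (card V)) \<le> 1 / 32"
  shows "simple_graph V E \<Longrightarrow> card E < 2 ^ t \<Longrightarrow> \<exists>D. expander_decomposition \<phi> t V E D"
proof (induction t arbitrary: E)
  case 0
  then have "E = {}"
    using simple_graph_finite_edges[OF "0.prems"(1)] by simp
  then have "expander_decomposition \<phi> 0 V E {}"
    unfolding expander_decomposition_def disjoint_family_on_def by simp
  then show ?case ..
next
  case (Suc t)
  obtain P where P: "partition_on V P" and crossing: "2 * card (crossing_edges E P) \<le> card E"
    and good: "\<And>X. X \<in> P \<Longrightarrow> weakly_regular (\<phi> / 4) X (induced_edges E X) \<and> is_expander \<phi> X (induced_edges E X)"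
    using exists_expander_partition[OF Suc.prems(1) n \<open>0 < \<phi>\<close> \<phi>] by blast
  have "simple_graph V (crossing_edges E P)"
    using Suc.prems(1) by (rule simple_graph_subset_edges) (auto simp: crossing_edges_def)
  moreover have "card (crossing_edges E P) < 2 ^ t"
    using crossing Suc.prems(2) by simp
  ultimately obtain D where "expander_decomposition \<phi> t V (crossing_edges E P) D"
    using Suc.IH by blast
  with Suc.prems(1) P good have "expander_decomposition \<phi> (Suc t) V E ((\<lambda>X. (X, induced_edges E X)) ` P \<union> D)"
    by (rule expander_decomposition_extend)
  then show ?case ..
qed

lemma bij_betw_card_filter:
  assumes "bij_betw f A B"
  shows "card {a\<in>A. P (f a)} = card {b\<in>B. P b}"
proof -
  have "bij_betw f {a\<in>A. P (f a)} (f ` {a\<in>A. P (f a)})"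
    using assms by (auto intro: bij_betw_subset)
  moreover have "f ` {a\<in>A. P (f a)} = {b\<in>B. P b}"
    using assms unfolding bij_betw_def by auto
  ultimately show ?thesis
    by (simp add: bij_betw_same_card)
qed

lemma expander_decomposition_enumerate:
  assumes D: "expander_decomposition \<phi> t V E D"
  obtains k :: nat and Vs Es where
    "\<forall>i<k. Vs i \<subseteq> V \<and> simple_graph (Vs i) (Es i)"
    "\<forall>i<k. \<forall>j<k. i \<noteq> j \<longrightarrow> Es i \<inter> Es j = {}"
    "(\<Union>i<k. Es i) = E"
    "\<forall>v\<in>V. card {i. i < k \<and> v \<in> Vs i} \<le> t"
    "\<forall>i<k. weakly_regular (\<phi> / 4) (Vs i) (Es i) \<and> is_expander \<phi> (Vs i) (Es i)"
proof -
  obtain f where f: "bij_betw f {..<card D} D"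
    using ex_bij_betw_nat_finite[of D] D unfolding expander_decomposition_def atLeast0LessThan by blast
  define k where "k = card D"
  have f_D: "f i \<in> D" if "i < k" for i
    using f that unfolding k_def bij_betw_def by auto
  have f_inj: "inj_on f {..<k}"
    using f unfolding k_def bij_betw_def by simp
  have f_image: "f ` {..<k} = D"
    using f unfolding k_def bij_betw_def by simp
  define Vs Es where "Vs i = fst (f i)" and "Es i = snd (f i)" for i
  have piece: "Vs i \<subseteq> V \<and> simple_graph (Vs i) (Es i) \<and> weakly_regular (\<phi> / 4) (Vs i) (Es i)
      \<and> is_expander \<phi> (Vs i) (Es i)" if "i < k" for i
  proof -
    have "\<forall>(X, F)\<in>D. X \<subseteq> V \<and> simple_graph X F \<and> weakly_regular (\<phi> / 4) X F \<and> is_expander \<phi> X F"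
      using D unfolding expander_decomposition_def by simp
    then show ?thesis
      using f_D[OF that] unfolding Vs_def Es_def by (cases "f i") fastforce
  qed
  then have subgraphs: "\<forall>i<k. Vs i \<subseteq> V \<and> simple_graph (Vs i) (Es i)"
    and expanders: "\<forall>i<k. weakly_regular (\<phi> / 4) (Vs i) (Es i) \<and> is_expander \<phi> (Vs i) (Es i)"
    by simp_all
  have disjoint: "\<forall>i<k. \<forall>j<k. i \<noteq> j \<longrightarrow> Es i \<inter> Es j = {}"
  proof (intro allI impI)
    fix i j assume "i < k" "j < k" "i \<noteq> j"
    then have "f i \<noteq> f j"
      using f_inj by (auto dest: inj_onD)
    then show "Es i \<inter> Es j = {}"
      using D f_D[OF \<open>i < k\<close>] f_D[OF \<open>j < k\<close>]
      unfolding expander_decomposition_def disjoint_family_on_def Es_def by blast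
  qed
  have union: "(\<Union>i<k. Es i) = E"
    using D unfolding expander_decomposition_def Es_def f_image[symmetric] by (simp add: image_image)
  have "card {i. i < k \<and> v \<in> Vs i} = card {p\<in>D. v \<in> fst p}" for v
    using bij_betw_card_filter[OF f, of "\<lambda>p. v \<in> fst p"] unfolding k_def Vs_def by simp
  then have overlap: "\<forall>v\<in>V. card {i. i < k \<and> v \<in> Vs i} \<le> t"
    using D unfolding expander_decomposition_def by simp
  show ?thesis
    using subgraphs disjoint union overlap expanders by (rule that)
qed

lemma linear_in_log2_le_ln_squared:
  assumes "2 \<le> n" "2 ^ s \<le> n"
  shows "real (2 * s + 2) \<le> 16 * (ln (real n))\<^sup>2"
proof -
  define L where "L = ln (real n)"
  have "real (2 ^ s) \<le> real n"
    using assms(2) by (simp only: of_nat_le_iff)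
  then have "ln (2 ^ s) \<le> L"
    using assms(1) unfolding L_def by simp
  then have "real s * ln 2 \<le> L"
    by (simp add: ln_realpow)
  then have "real s \<le> 2 * L"
    using ln_2_ge_half mult_left_mono[OF ln_2_ge_half, of "real s"] by linarith
  moreover have "ln 2 \<le> L"
    using assms(1) unfolding L_def by simp
  then have "1 / 2 \<le> L"
    using ln_2_ge_half by linarith
  then have "4 * L + 2 \<le> 16 * L\<^sup>2"
    using mult_nonneg_nonneg[of "8 * L + 2" "2 * L - 1"] by (simp add: algebra_simps power2_eq_square)
  ultimately show ?thesis
    unfolding L_def by simp
qed

lemma expander_decomposition_explicit_constants:
  fixes V :: "'a set" and E :: "'a set set"
  assumes E: "simple_graph V E" and n: "2 \<le> card V"
  shows "let \<alpha> = 1 / 32 / ln (real (card V)) in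
     \<exists>(k :: nat) (Vs :: nat \<Rightarrow> 'a set) (Es :: nat \<Rightarrow> 'a set set).
       (\<forall>i<k. Vs i \<subseteq> V \<and> simple_graph (Vs i) (Es i)) \<and>
       (\<forall>i<k. \<forall>j<k. i \<noteq> j \<longrightarrow> Es i \<inter> Es j = {}) \<and>
       (\<Union>i<k. Es i) = E \<and>
       (\<forall>v\<in>V. real (card {i. i < k \<and> v \<in> Vs i}) \<le> 16 * (ln (real (card V)))\<^sup>2) \<and>
       (\<forall>i<k. weakly_regular (\<alpha> / 4) (Vs i) (Es i) \<and> is_expander \<alpha> (Vs i) (Es i))"
proof -
  define \<alpha> where "\<alpha> = 1 / 32 / ln (real (card V))"
  have "0 < \<alpha>" "\<alpha> * ln (real (card V)) \<le> 1 / 32"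
    using n unfolding \<alpha>_def by auto
  obtain s where s: "2 ^ s \<le> card V" "card V < 2 ^ (s + 1)"
    using ex_power_ivl1[of 2 "card V"] n by auto
  have "2 * s + 2 = (s + 1) + (s + 1)"
    by simp
  then have "card E < 2 ^ (2 * s + 2)"
    using card_edges_le[OF E] mult_strict_mono[OF s(2) s(2)] by (simp only: power_add) simp
  then obtain D where "expander_decomposition \<alpha> (2 * s + 2) V E D"
    using expander_decomposition_exists[OF n \<open>0 < \<alpha>\<close> \<open>\<alpha> * ln (real (card V)) \<le> 1 / 32\<close> E] by blast
  then obtain k :: nat and Vs Es where decomposition:
    "\<forall>i<k. Vs i \<subseteq> V \<and> simple_graph (Vs i) (Es i)"
    "\<forall>i<k. \<forall>j<k. i \<noteq> j \<longrightarrow> Es i \<inter> Es j = {}"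
    "(\<Union>i<k. Es i) = E"
    and overlap: "\<forall>v\<in>V. card {i. i < k \<and> v \<in> Vs i} \<le> 2 * s + 2"
    and expanders: "\<forall>i<k. weakly_regular (\<alpha> / 4) (Vs i) (Es i) \<and> is_expander \<alpha> (Vs i) (Es i)"
    by (rule expander_decomposition_enumerate)
  have "\<forall>v\<in>V. real (card {i. i < k \<and> v \<in> Vs i}) \<le> 16 * (ln (real (card V)))\<^sup>2"
    using overlap linear_in_log2_le_ln_squared[OF n s(1)] by (meson of_nat_le_iff order_trans)
  then show ?thesis
    using decomposition expanders unfolding Let_def \<alpha>_def[symmetric] by blast
qed

theorem mainTheorem5:
  shows "\<exists>c>0. \<exists>C>0. \<forall>(V :: 'a set) (E :: 'a set set).
    simple_graph V E \<and> card V \<ge> 2 \<longrightarrow>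
    (let \<alpha> = c / ln (real (card V)) in
     \<exists>(k :: nat) (Vs :: nat \<Rightarrow> 'a set) (Es :: nat \<Rightarrow> 'a set set).
       (\<forall>i<k. Vs i \<subseteq> V \<and> simple_graph (Vs i) (Es i)) \<and>
       (\<forall>i<k. \<forall>j<k. i \<noteq> j \<longrightarrow> Es i \<inter> Es j = {}) \<and>
       (\<Union>i<k. Es i) = E \<and>
       (\<forall>v\<in>V. real (card {i. i < k \<and> v \<in> Vs i}) \<le> C * (ln (real (card V)))\<^sup>2) \<and>
       (\<forall>i<k. weakly_regular (\<alpha> / 4) (Vs i) (Es i) \<and> is_expander \<alpha> (Vs i) (Es i)))"
  by (rule exI[of _ "1 / 32"], rule conjI, simp, rule exI[of _ 16], rule conjI, simp,
      intro allI impI, elim conjE, rule expander_decomposition_explicit_constants)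

end
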